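(* Let $m$ be an odd positive integer and $\ell=\lceil\log_2 m\rceil$. If $\mathfrak K(m)>2^\ell+1$, then $\mathbf t_{m+1}\mathbf t_{m+2}=11$ and $\mathbf t_{2m+1}\mathbf t_{2m+2}=10$.
   Context: The Thue–Morse word is $\mathbf t=\mathbf t_1\mathbf t_2\cdots$ where $\mathbf t_i\in\{0,1\}$ has the parity of the number of $1$'s in the binary expansion of $i-1$. For positive integers $\alpha\le\beta$, $\langle\alpha,\beta\rangle=\mathbf t_\alpha\cdots\mathbf t_\beta$. A $k$-anti-power is a word $w_1\cdots w_k$ with $w_1,\dots,w_k$ pairwise distinct words of equal length. For a positive integer $m$, $\mathfrak K(m)$ is the smallest positive integer $k$ such that the prefix $\langle 1,km\rangle$ of $\mathbf t$ is not a $k$-anti-power. *)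

theory Defs
  imports Complex_Main
begin

fun ones :: "nat \<Rightarrow> nat" where
  "ones n = (if n = 0 then 0 else n mod 2 + ones (n div 2))"

(* Thue-Morse word, 1-indexed: t i for i \<ge> 1 *)
definition tm :: "nat \<Rightarrow> nat" where
  "tm i = ones (i - 1) mod 2"

definition seg :: "nat \<Rightarrow> nat \<Rightarrow> nat list" where
  "seg \<alpha> \<beta> = map tm [\<alpha>..<\<beta> + 1]"

definition is_antipower_prefix :: "nat \<Rightarrow> nat \<Rightarrow> bool" where
  "is_antipower_prefix k m = distinct (map (\<lambda>j. seg (j * m + 1) ((j + 1) * m)) [0..<k])"

definition K :: "nat \<Rightarrow> nat" where
  "K m = (LEAST k. 0 < k \<and> \<not> is_antipower_prefix k m)"

end

theory Submission
  imports Defs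
begin

text \<open>
  Let \<open>L = 2^\<ell> \<ge> m\<close>. For \<open>i < L\<close> the binary expansion of \<open>L m + i\<close> is that of \<open>m\<close>
  followed by that of \<open>i\<close>, so block \<open>L\<close> of the prefix is block \<open>0\<close>, complemented iff
  \<open>t\<^sub>m\<^sub>+\<^sub>1 = 1\<close>; as the two blocks differ, \<open>t\<^sub>m\<^sub>+\<^sub>1 = 1\<close>. Writing \<open>m = 2q + 1\<close>, the same
  splitting of \<open>(L/2) m + i\<close> as \<open>L q + (L/2 + i)\<close> for \<open>i < L/2\<close> and as
  \<open>L (q + 1) + (i - L/2)\<close> otherwise shows that blocks \<open>L/2\<close>
  and \<open>L\<close> coincide as soon as the digit sums of \<open>q\<close> and \<open>q + 1\<close> have equal parity, which
  is the case iff \<open>t\<^sub>m\<^sub>+\<^sub>2 = 0\<close>. Finally \<open>t\<^sub>2\<^sub>m\<^sub>+\<^sub>1 = t\<^sub>m\<^sub>+\<^sub>1\<close> and \<open>t\<^sub>2\<^sub>m\<^sub>+\<^sub>2 = 1 - t\<^sub>m\<^sub>+\<^sub>1\<close>.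
\<close>

declare ones.simps[simp del]

lemma ones_0 [simp]: "ones 0 = 0"
  by (simp add: ones.simps)

lemma ones_double: "ones (2 * n) = ones n"
  by (cases "n = 0") (simp, subst ones.simps, simp)

lemma ones_Suc_double: "ones (Suc (2 * n)) = Suc (ones n)"
  by (subst ones.simps) simp

lemma ones_pow2_mult_add:
  assumes "b < 2 ^ k"
  shows "ones (2 ^ k * a + b) = ones a + ones b"
  using assms
proof (induction k arbitrary: a b)
  case 0
  then show ?case by simp
next
  case (Suc k)
  have b_div_mod: "b = 2 * (b div 2) + b mod 2" by simp
  have "b div 2 < 2 ^ k" using Suc.prems by simp
  then have IH: "ones (2 ^ k * a + b div 2) = ones a + ones (b div 2)" by (rule Suc.IH)
  have split: "2 ^ Suc k * a + b = 2 * (2 ^ k * a + b div 2) + b mod 2"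
    by (subst b_div_mod) simp
  show ?case
  proof (cases "even b")
    case True
    then have "ones (2 ^ Suc k * a + b) = ones (2 * (2 ^ k * a + b div 2))"
      unfolding split by (simp add: even_iff_mod_2_eq_zero)
    then have "ones (2 ^ Suc k * a + b) = ones (2 ^ k * a + b div 2)"
      by (simp only: ones_double)
    then show ?thesis
      using IH ones_double[of "b div 2"] True by simp
  next
    case False
    then have "ones (2 ^ Suc k * a + b) = ones (Suc (2 * (2 ^ k * a + b div 2)))"
      unfolding split by (simp add: odd_iff_mod_2_eq_one)
    then have "ones (2 ^ Suc k * a + b) = Suc (ones (2 ^ k * a + b div 2))"
      by (simp only: ones_Suc_double)
    then show ?thesis
      using IH ones_Suc_double[of "b div 2"] False b_div_mod by (simp add: odd_iff_mod_2_eq_one)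
  qed
qed

definition thue_morse :: "nat \<Rightarrow> nat" where
  "thue_morse n = ones n mod 2"

lemma tm_Suc: "tm (Suc n) = thue_morse n"
  by (simp add: tm_def thue_morse_def)

lemma thue_morse_double: "thue_morse (2 * n) = thue_morse n"
  by (simp add: thue_morse_def ones_double)

lemma thue_morse_Suc_double: "thue_morse (Suc (2 * n)) = 1 - thue_morse n"
  by (simp add: thue_morse_def ones_Suc_double mod_Suc)

lemma thue_morse_Suc_0 [simp]: "thue_morse (Suc 0) = 1"
  using thue_morse_Suc_double[of 0] by (simp add: thue_morse_def)

lemma thue_morse_pow2_mult_add:
  "b < 2 ^ k \<Longrightarrow> thue_morse (2 ^ k * a + b) = (thue_morse a + thue_morse b) mod 2"
  by (simp add: thue_morse_def ones_pow2_mult_add mod_add_eq)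

lemma thue_morse_cases: "thue_morse n = 0 \<or> thue_morse n = 1"
  unfolding thue_morse_def by presburger

definition tm_block :: "nat \<Rightarrow> nat \<Rightarrow> nat list" where
  "tm_block m j = seg (j * m + 1) ((j + 1) * m)"

lemma tm_block_eq_map: "tm_block m j = map (\<lambda>i. thue_morse (j * m + i)) [0..<m]"
proof -
  have "(j + 1) * m + 1 = m + (j * m + 1)" by simp
  then have "[j * m + 1..<(j + 1) * m + 1] = map (\<lambda>i. i + (j * m + 1)) [0..<m]"
    by (simp only: map_add_upt)
  then show ?thesis
    by (simp add: tm_block_def seg_def tm_def thue_morse_def add.commute)
qed

lemma tm_block_eqI:
  assumes "\<And>i. i < m \<Longrightarrow> thue_morse (j * m + i) = thue_morse (j' * m + i)"
  shows "tm_block m j = tm_block m j'"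
  using assms by (simp add: tm_block_eq_map)

lemma antipower_prefix_tm_block_neq:
  assumes "is_antipower_prefix k m" "a < k" "b < k" "a \<noteq> b"
  shows "tm_block m a \<noteq> tm_block m b"
proof -
  have "inj_on (tm_block m) {0..<k}"
    using assms(1) by (simp add: is_antipower_prefix_def tm_block_def[abs_def] distinct_map)
  then show ?thesis
    using assms(2-4) by (auto dest: inj_onD)
qed

lemma is_antipower_prefix_if_less_K:
  assumes "0 < k" "k < K m"
  shows "is_antipower_prefix k m"
  using assms not_less_Least unfolding K_def by blast

lemma le_pow2_ceiling_log2:
  assumes "0 < m"
  shows "m \<le> 2 ^ nat \<lceil>log 2 (real m)\<rceil>"
proof -
  have "real m = 2 powr log 2 (real m)" using assms by simp
  also have "\<dots> \<le> 2 powr real (nat \<lceil>log 2 (real m)\<rceil>)"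
    by (intro powr_mono) linarith+
  also have "\<dots> = real (2 ^ nat \<lceil>log 2 (real m)\<rceil>)"
    by (simp add: powr_realpow)
  finally show ?thesis by linarith
qed

lemma tm_block_pow2_eq_tm_block_0:
  assumes "m \<le> 2 ^ l" "thue_morse m = 0"
  shows "tm_block m (2 ^ l) = tm_block m 0"
proof (rule tm_block_eqI)
  fix i assume "i < m"
  then have "i < 2 ^ l" using assms(1) by simp
  then show "thue_morse (2 ^ l * m + i) = thue_morse (0 * m + i)"
    using thue_morse_pow2_mult_add[of i l m] assms(2) by (simp add: thue_morse_def)
qed

lemma tm_block_pow2_eq_tm_block_double:
  assumes m: "m = Suc (2 * q)" "m \<le> 2 ^ Suc k"
    and parity: "thue_morse (Suc q) = thue_morse q"
  shows "tm_block m (2 ^ k) = tm_block m (2 ^ Suc k)"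
proof (rule tm_block_eqI)
  fix i assume "i < m"
  define H :: nat where "H = 2 ^ k"
  have TM: "thue_morse m = 1 - thue_morse q"
    using m(1) by (simp add: thue_morse_Suc_double)
  have right: "thue_morse (2 ^ Suc k * m + i) = (thue_morse m + thue_morse i) mod 2"
    using \<open>i < m\<close> m(2) by (intro thue_morse_pow2_mult_add) simp
  show "thue_morse (2 ^ k * m + i) = thue_morse (2 ^ Suc k * m + i)"
  proof (cases "i < H")
    case True
    have "2 ^ k * 1 + i < 2 ^ Suc k" using True by (simp add: H_def)
    then have "thue_morse (2 ^ Suc k * q + (2 ^ k * 1 + i))
        = (thue_morse q + thue_morse (2 ^ k * 1 + i)) mod 2"
      by (rule thue_morse_pow2_mult_add)
    also have "thue_morse (2 ^ k * 1 + i) = (1 + thue_morse i) mod 2"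
      using True thue_morse_pow2_mult_add[of i k 1] by (simp add: H_def)
    also have "2 ^ Suc k * q + (2 ^ k * 1 + i) = 2 ^ k * m + i"
      using m(1) by (simp add: algebra_simps)
    finally show ?thesis
      using right TM thue_morse_cases[of q] thue_morse_cases[of i] by auto
  next
    case False
    have small: "i - H < 2 ^ k" using \<open>i < m\<close> m(2) by (simp add: H_def)
    have "thue_morse (2 ^ k * m + i) = thue_morse (2 ^ Suc k * Suc q + (i - H))"
      using m(1) False by (simp add: H_def algebra_simps)
    also have "\<dots> = (thue_morse (Suc q) + thue_morse (i - H)) mod 2"
      using small by (intro thue_morse_pow2_mult_add) simp
    finally have left: "thue_morse (2 ^ k * m + i) = (thue_morse q + thue_morse (i - H)) mod 2"
      using parity by simp
    have "thue_morse i = thue_morse (2 ^ k * 1 + (i - H))"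
      using False by (simp add: H_def)
    also have "\<dots> = (1 + thue_morse (i - H)) mod 2"
      using small thue_morse_pow2_mult_add[of "i - H" k 1] by simp
    finally show ?thesis
      using left right TM thue_morse_cases[of q] thue_morse_cases[of "i - H"] by auto
  qed
qed

theorem lemma3:
  fixes m :: nat
  assumes "odd m" and "0 < m"
    and "K m > 2 ^ nat \<lceil>log 2 (real m)\<rceil> + 1"
  shows "tm (m + 1) = 1 \<and> tm (m + 2) = 1 \<and> tm (2 * m + 1) = 1 \<and> tm (2 * m + 2) = 0"
proof -
  define l where "l = nat \<lceil>log 2 (real m)\<rceil>"
  have m_le: "m \<le> 2 ^ l"
    unfolding l_def using assms(2) by (rule le_pow2_ceiling_log2)
  have anti: "is_antipower_prefix (2 ^ l + 1) m"
    using assms(3) by (intro is_antipower_prefix_if_less_K) (simp_all add: l_def)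
  obtain q where q: "m = Suc (2 * q)"
    using assms(1) oddE by fastforce
  have key: "thue_morse m = 1 \<and> thue_morse (Suc m) = 1"
  proof (cases "q = 0")
    case True
    then show ?thesis
      using q thue_morse_double[of 1] by (simp add: numeral_2_eq_2)
  next
    case False
    obtain k where k: "l = Suc k"
      using m_le q False by (cases l) auto
    have "tm_block m (2 ^ l) \<noteq> tm_block m 0"
      using antipower_prefix_tm_block_neq[OF anti] by simp
    then have TM: "thue_morse m = 1"
      using tm_block_pow2_eq_tm_block_0[OF m_le] thue_morse_cases[of m] by auto
    have "tm_block m (2 ^ k) \<noteq> tm_block m (2 ^ Suc k)"
      using antipower_prefix_tm_block_neq[OF anti] k by simp
    then have "thue_morse (Suc q) \<noteq> thue_morse q"
      using tm_block_pow2_eq_tm_block_double[OF q] m_le k by auto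
    moreover have "thue_morse q = 0"
      using TM q thue_morse_cases[of q] by (simp add: thue_morse_Suc_double)
    moreover have "thue_morse (Suc m) = thue_morse (Suc q)"
      using q thue_morse_double[of "Suc q"] by simp
    ultimately show ?thesis
      using TM thue_morse_cases[of "Suc q"] by auto
  qed
  then show ?thesis
    using thue_morse_double[of m] thue_morse_Suc_double[of m] by (simp add: tm_Suc)
qed

end
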